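(* $\chi_i(C_4\Box C_5)\leq 6$ and $\chi_i(C_7\Box C_7)\leq 6$.
   Context: For a graph $G$, an incidence is a pair $(v,e)$ with $v\in V(G)$, $e\in E(G)$ and $v$ incident with $e$. Two incidences $(v,e)$ and $(w,f)$ are adjacent if $v=w$, or $e=f$, or the edge $vw$ equals $e$ or $f$. An incidence $k$-coloring of $G$ is a map from the set of incidences of $G$ to a set of $k$ colors such that adjacent incidences receive distinct colors; the incidence chromatic number $\chi_i(G)$ is the least such $k$. $C_n$ denotes the cycle on $n$ vertices and $\Box$ the Cartesian product of graphs: $G\Box H$ has vertex set $V(G)\times V(H)$, with $(u_1,v_1)$ adjacent to $(u_2,v_2)$ iff either $u_1=u_2$ and $v_1v_2\in E(H)$, or $v_1=v_2$ and $u_1u_2\in E(G)$. *)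

theory Defs
  imports Main
begin

text \<open>A graph is represented by a vertex set V and a set E of edges (2-element sets).\<close>

definition incidences :: "'a set \<Rightarrow> 'a set set \<Rightarrow> ('a \<times> 'a set) set" where
  "incidences V E = {(v, e). v \<in> V \<and> e \<in> E \<and> v \<in> e}"

definition inc_adjacent :: "('a \<times> 'a set) \<Rightarrow> ('a \<times> 'a set) \<Rightarrow> bool" where
  "inc_adjacent i j \<longleftrightarrow> (case (i, j) of ((v, e), (w, f)) \<Rightarrow>
      v = w \<or> e = f \<or> {v, w} = e \<or> {v, w} = f)"

definition incidence_coloring :: "'a set \<Rightarrow> 'a set set \<Rightarrow> nat \<Rightarrow> ('a \<times> 'a set \<Rightarrow> nat) \<Rightarrow> bool" where
  "incidence_coloring V E k c \<longleftrightarrow>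
     (\<forall>i\<in>incidences V E. c i < k) \<and>
     (\<forall>i\<in>incidences V E. \<forall>j\<in>incidences V E. i \<noteq> j \<and> inc_adjacent i j \<longrightarrow> c i \<noteq> c j)"

definition incidence_chromatic_number :: "'a set \<Rightarrow> 'a set set \<Rightarrow> nat" where
  "incidence_chromatic_number V E = (LEAST k. \<exists>c. incidence_coloring V E k c)"

definition cycle_V :: "nat \<Rightarrow> nat set" where
  "cycle_V n = {0..<n}"

definition cycle_E :: "nat \<Rightarrow> nat set set" where
  "cycle_E n = {{i, (i + 1) mod n} | i. i < n}"

definition cart_V :: "'a set \<Rightarrow> 'b set \<Rightarrow> ('a \<times> 'b) set" where
  "cart_V V1 V2 = V1 \<times> V2"

definition cart_E :: "'a set \<Rightarrow> 'a set set \<Rightarrow> 'b set \<Rightarrow> 'b set set \<Rightarrow> ('a \<times> 'b) set set" where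
  "cart_E V1 E1 V2 E2 =
     {{(u, v1), (u, v2)} | u v1 v2. u \<in> V1 \<and> {v1, v2} \<in> E2} \<union>
     {{(u1, v), (u2, v)} | u1 u2 v. v \<in> V2 \<and> {u1, u2} \<in> E1}"

end

theory Submission
  imports Defs
begin

text \<open>Suppose the neighbours of every vertex p are listed as nb p d, with d ranging over a set I
  of directions and distinct directions giving distinct neighbours. Then every incidence (v, e) is
  e = {v, nb v d} for exactly one direction d, so a colouring T of the vertex-direction pairs
  induces a colouring of the incidences. Two adjacent incidences either share their vertex or the
  vertex of one is the far end of the edge of the other; hence the induced colouring is an
  incidence colouring as soon as the directions at each vertex get distinct colours and T p d
  avoids all colours used at the neighbour nb p d. In C_m \<box> C_n with m, n \<ge> 3 the four cycle
  steps serve as directions, and for C_4 \<box> C_5 and C_7 \<box> C_7 explicit tables with six colours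
  satisfying these conditions are verified by evaluation.\<close>

lemma incidence_chromatic_number_le:
  assumes "incidence_coloring V E k c"
  shows "incidence_chromatic_number V E \<le> k"
  unfolding incidence_chromatic_number_def using assms by (blast intro: Least_le)

definition direction_coloring ::
    "'a set \<Rightarrow> 'd set \<Rightarrow> ('a \<Rightarrow> 'd \<Rightarrow> 'a) \<Rightarrow> nat \<Rightarrow> ('a \<Rightarrow> 'd \<Rightarrow> nat) \<Rightarrow> bool" where
  "direction_coloring V I nb k T \<longleftrightarrow>
     (\<forall>p\<in>V. \<forall>d\<in>I. T p d < k \<and>
        (\<forall>d'\<in>I. d' \<noteq> d \<longrightarrow> T p d' \<noteq> T p d) \<and>
        (\<forall>d'\<in>I. T p d \<noteq> T (nb p d) d'))"

locale directed_neighbourhoods =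
  fixes V :: "'a set" and E :: "'a set set" and I :: "'d set" and nb :: "'a \<Rightarrow> 'd \<Rightarrow> 'a"
  assumes edge_from_direction: "e \<in> E \<Longrightarrow> \<exists>p\<in>V. \<exists>d\<in>I. e = {p, nb p d}"
    and nb_neq: "p \<in> V \<Longrightarrow> d \<in> I \<Longrightarrow> nb p d \<noteq> p"
    and inj_on_nb: "p \<in> V \<Longrightarrow> inj_on (nb p) I"
    and nb_back: "p \<in> V \<Longrightarrow> d \<in> I \<Longrightarrow> \<exists>d'\<in>I. nb (nb p d) d' = p"
begin

definition direction_of :: "'a \<Rightarrow> 'a set \<Rightarrow> 'd" where
  "direction_of v e = (THE d. d \<in> I \<and> e = {v, nb v d})"

lemma incidence_has_direction:
  assumes "(v, e) \<in> incidences V E"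
  shows "v \<in> V \<and> (\<exists>d\<in>I. e = {v, nb v d})"
proof -
  from assms have e: "e \<in> E" "v \<in> e" "v \<in> V" by (auto simp: incidences_def)
  then obtain p d where p: "p \<in> V" "d \<in> I" "e = {p, nb p d}"
    using edge_from_direction by blast
  show ?thesis
  proof (cases "v = p")
    case True
    then show ?thesis using p e by blast
  next
    case False
    with p e have "v = nb p d" by auto
    moreover obtain d' where "d' \<in> I" "nb (nb p d) d' = p" using nb_back p by blast
    ultimately show ?thesis using p e by (metis insert_commute)
  qed
qed

lemma direction_of_eq:
  assumes "v \<in> V" "d \<in> I"
  shows "direction_of v {v, nb v d} = d"
  unfolding direction_of_def
proof (rule the_equality)
  fix d' assume d': "d' \<in> I \<and> {v, nb v d} = {v, nb v d'}"
  with assms nb_neq have "nb v d' = nb v d" by (metis doubleton_eq_iff)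
  with assms d' inj_on_nb show "d' = d" by (meson inj_onD)
qed (use assms in simp)

lemma incidence_coloring_of_direction_coloring:
  assumes T: "direction_coloring V I nb k T"
  shows "incidence_coloring V E k (\<lambda>(v, e). T v (direction_of v e))"
    (is "incidence_coloring V E k ?c")
proof -
  have bounded: "T p d < k" and distinct: "d' \<noteq> d \<Longrightarrow> T p d' \<noteq> T p d"
    and separated: "T p d \<noteq> T (nb p d) d'"
    if "p \<in> V" "d \<in> I" "d' \<in> I" for p d d'
    using T that unfolding direction_coloring_def by blast+
  have incidence: "\<exists>d\<in>I. v \<in> V \<and> e = {v, nb v d} \<and> ?c (v, e) = T v d"
    if ve: "(v, e) \<in> incidences V E" for v e
  proof -
    obtain d where "v \<in> V" "d \<in> I" "e = {v, nb v d}"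
      using incidence_has_direction[OF ve] by blast
    with direction_of_eq show ?thesis by auto
  qed
  show ?thesis
    unfolding incidence_coloring_def
  proof (intro conjI ballI impI)
    fix i assume i: "i \<in> incidences V E"
    obtain v e where "i = (v, e)" by fastforce
    with i incidence obtain d where "v \<in> V" "d \<in> I" "?c i = T v d" by blast
    with bounded[of v d d] show "?c i < k" by simp
  next
    fix i j assume i: "i \<in> incidences V E" and j: "j \<in> incidences V E"
      and ij: "i \<noteq> j \<and> inc_adjacent i j"
    obtain v e w f where ij_eq: "i = (v, e)" "j = (w, f)" by fastforce
    obtain d where d: "d \<in> I" "v \<in> V" "e = {v, nb v d}" "?c i = T v d"
      using incidence i ij_eq(1) by blast
    obtain d' where d': "d' \<in> I" "w \<in> V" "f = {w, nb w d'}" "?c j = T w d'"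
      using incidence j ij_eq(2) by blast
    show "?c i \<noteq> ?c j"
    proof (cases "v = w")
      case True
      with ij ij_eq d d' have "d \<noteq> d'" by auto
      with distinct[of v d' d] True d d' show ?thesis by simp
    next
      case False
      with ij ij_eq d d' nb_neq have "w = nb v d \<or> v = nb w d'"
        by (auto simp: inc_adjacent_def doubleton_eq_iff)
      with separated[of v d d'] separated[of w d' d] d d' show ?thesis by auto
    qed
  qed
qed

lemma incidence_chromatic_number_le_direction_coloring:
  assumes "direction_coloring V I nb k T"
  shows "incidence_chromatic_number V E \<le> k"
  using incidence_coloring_of_direction_coloring[OF assms] by (rule incidence_chromatic_number_le)

end

lemma succ_mod_eq:
  fixes j n :: nat
  assumes "j < n" shows "(j + 1) mod n = (if j + 1 = n then 0 else j + 1)"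
proof (cases "j + 1 = n")
  case False
  with assms have "j + 1 < n" by linarith
  then show ?thesis by simp
qed simp

lemma pred_mod_eq:
  fixes j n :: nat
  assumes "j < n" shows "(j + n - 1) mod n = (if j = 0 then n - 1 else j - 1)"
proof (cases "j = 0")
  case False
  with assms have shift: "j + n - 1 = (j - 1) + n" by linarith
  from assms have "j - 1 < n" by linarith
  with False show ?thesis unfolding shift mod_add_self2 by simp
qed (use assms in simp)

definition torus_step :: "nat \<Rightarrow> nat \<Rightarrow> nat \<times> nat \<Rightarrow> nat \<Rightarrow> nat \<times> nat" where
  "torus_step m n p d = (case p of (i, j) \<Rightarrow>
     if d = 0 then (i, (j + 1) mod n)
     else if d = 1 then (i, (j + n - 1) mod n)
     else if d = 2 then ((i + 1) mod m, j)
     else ((i + m - 1) mod m, j))"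

lemma torus_step_explicit:
  assumes "i < m" "j < n"
  shows "torus_step m n (i, j) d =
    (if d = 0 then (i, if j + 1 = n then 0 else j + 1)
     else if d = 1 then (i, if j = 0 then n - 1 else j - 1)
     else if d = 2 then (if i + 1 = m then 0 else i + 1, j)
     else (if i = 0 then m - 1 else i - 1, j))"
  using succ_mod_eq[OF assms(1)] succ_mod_eq[OF assms(2)]
    pred_mod_eq[OF assms(1)] pred_mod_eq[OF assms(2)]
  by (simp add: torus_step_def)

lemma torus_step_neq:
  assumes "3 \<le> m" "3 \<le> n" "i < m" "j < n" "d < 4"
  shows "torus_step m n (i, j) d \<noteq> (i, j)"
  using assms by (auto simp: torus_step_explicit numeral_eq_Suc less_Suc_eq)

lemma inj_on_torus_step:
  assumes "3 \<le> m" "3 \<le> n" "i < m" "j < n"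
  shows "inj_on (torus_step m n (i, j)) {..<4}"
  using assms by (auto simp: inj_on_def torus_step_explicit numeral_eq_Suc less_Suc_eq split: if_splits)

lemma torus_step_back:
  assumes "3 \<le> m" "3 \<le> n" "i < m" "j < n" "d < 4"
  shows "torus_step m n (torus_step m n (i, j) d) (if even d then d + 1 else d - 1) = (i, j)"
proof -
  from \<open>d < 4\<close> have "d = 0 \<or> d = 1 \<or> d = 2 \<or> d = 3" by auto
  with assms show ?thesis by (elim disjE) (auto simp: torus_step_explicit)
qed

lemma torus_directed_neighbourhoods:
  assumes "3 \<le> m" "3 \<le> n"
  shows "directed_neighbourhoods (cart_V (cycle_V m) (cycle_V n))
    (cart_E (cycle_V m) (cycle_E m) (cycle_V n) (cycle_E n)) {..<4::nat} (torus_step m n)"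
proof (unfold_locales)
  let ?V = "cart_V (cycle_V m) (cycle_V n)"
  have V: "?V = {0..<m} \<times> {0..<n}" by (simp add: cart_V_def cycle_V_def)
  fix e assume "e \<in> cart_E (cycle_V m) (cycle_E m) (cycle_V n) (cycle_E n)"
  then consider
      (horizontal) u i where "e = {(u, i), (u, (i + 1) mod n)}" "u < m" "i < n"
    | (vertical) i v where "e = {(i, v), ((i + 1) mod m, v)}" "v < n" "i < m"
    unfolding cart_E_def cycle_E_def cycle_V_def by (auto simp: doubleton_eq_iff insert_commute)
  then show "\<exists>p\<in>?V. \<exists>d\<in>{..<4}. e = {p, torus_step m n p d}"
  proof cases
    case horizontal
    then show ?thesis unfolding V
      by (intro bexI[of _ "(u, i)"] bexI[of _ 0]) (auto simp: torus_step_def)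
  next
    case vertical
    then show ?thesis unfolding V
      by (intro bexI[of _ "(i, v)"] bexI[of _ 2]) (auto simp: torus_step_def)
  qed
next
  fix p d assume "p \<in> cart_V (cycle_V m) (cycle_V n)" "d \<in> {..<4::nat}"
  with assms torus_step_neq show "torus_step m n p d \<noteq> p"
    by (auto simp: cart_V_def cycle_V_def)
next
  fix p assume "p \<in> cart_V (cycle_V m) (cycle_V n)"
  with assms inj_on_torus_step show "inj_on (torus_step m n p) {..<4}"
    by (auto simp: cart_V_def cycle_V_def)
next
  fix p d assume "p \<in> cart_V (cycle_V m) (cycle_V n)" "d \<in> {..<4::nat}"
  then obtain i j where ij: "p = (i, j)" "i < m" "j < n" "d < 4"
    by (auto simp: cart_V_def cycle_V_def)
  with assms torus_step_back
  have "torus_step m n (torus_step m n p d) (if even d then d + 1 else d - 1) = p" by blast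
  moreover have "(if even d then d + 1 else d - 1) \<in> {..<4}" using ij by auto
  ultimately show "\<exists>d'\<in>{..<4}. torus_step m n (torus_step m n p d) d' = p" by blast
qed

lemma torus_incidence_chromatic_number_le:
  assumes "3 \<le> m" "3 \<le> n"
    and "direction_coloring ({0..<m} \<times> {0..<n}) {..<4} (torus_step m n) k T"
  shows "incidence_chromatic_number (cart_V (cycle_V m) (cycle_V n))
           (cart_E (cycle_V m) (cycle_E m) (cycle_V n) (cycle_E n)) \<le> k"
  using directed_neighbourhoods.incidence_chromatic_number_le_direction_coloring
    [OF torus_directed_neighbourhoods[OF assms(1,2)]] assms(3)
  by (simp add: cart_V_def cycle_V_def)

definition torus_4_5_colors :: "nat list list" where
  "torus_4_5_colors =
    [[4, 1, 5, 3], [0, 2, 3, 1], [1, 5, 2, 3], [5, 0, 3, 2], [2, 4, 0, 3],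
     [3, 0, 1, 2], [2, 4, 0, 5], [3, 1, 5, 4], [0, 2, 4, 1], [4, 5, 2, 1],
     [0, 2, 3, 4], [4, 5, 1, 3], [1, 2, 3, 0], [0, 5, 2, 3], [1, 4, 5, 3],
     [2, 5, 0, 1], [3, 4, 5, 0], [0, 2, 4, 5], [5, 3, 1, 4], [4, 0, 1, 2]]"

definition torus_7_7_colors :: "nat list list" where
  "torus_7_7_colors =
    [[0, 1, 4, 5], [5, 3, 2, 4], [3, 1, 2, 0], [4, 5, 2, 0], [0, 1, 2, 3], [2, 4, 3, 1], [3, 5, 0, 4],
     [2, 0, 1, 3], [4, 5, 0, 1], [1, 3, 0, 5], [5, 4, 0, 3], [3, 1, 0, 4], [1, 2, 5, 0], [5, 4, 3, 2],
     [4, 0, 3, 5], [5, 1, 2, 3], [3, 4, 1, 2], [2, 5, 4, 1], [4, 3, 1, 5], [0, 2, 1, 3], [2, 4, 5, 1],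
     [2, 5, 0, 1], [1, 3, 5, 4], [3, 0, 4, 5], [5, 2, 1, 0], [2, 3, 4, 0], [0, 5, 3, 4], [4, 1, 2, 3],
     [5, 2, 1, 4], [4, 3, 1, 2], [1, 5, 3, 2], [4, 0, 5, 3], [3, 2, 0, 5], [2, 4, 0, 1], [3, 5, 1, 0],
     [2, 3, 4, 0], [3, 5, 4, 0], [5, 2, 0, 4], [0, 3, 4, 2], [2, 5, 3, 1], [3, 4, 1, 5], [5, 0, 4, 2],
     [2, 0, 3, 1], [3, 5, 0, 1], [4, 2, 5, 1], [2, 3, 1, 5], [1, 0, 5, 4], [0, 3, 5, 2], [5, 1, 2, 3]]"

lemma direction_coloring_torus_4_5:
  "direction_coloring ({0..<4} \<times> {0..<5}) {..<4} (torus_step 4 5) 6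
     (\<lambda>(i, j) d. torus_4_5_colors ! (5 * i + j) ! d)"
  by code_simp

lemma direction_coloring_torus_7_7:
  "direction_coloring ({0..<7} \<times> {0..<7}) {..<4} (torus_step 7 7) 6
     (\<lambda>(i, j) d. torus_7_7_colors ! (7 * i + j) ! d)"
  by code_simp

theorem lemma4:
  shows "incidence_chromatic_number (cart_V (cycle_V 4) (cycle_V 5))
           (cart_E (cycle_V 4) (cycle_E 4) (cycle_V 5) (cycle_E 5)) \<le> 6
       \<and> incidence_chromatic_number (cart_V (cycle_V 7) (cycle_V 7))
           (cart_E (cycle_V 7) (cycle_E 7) (cycle_V 7) (cycle_E 7)) \<le> 6"
  using torus_incidence_chromatic_number_le[OF _ _ direction_coloring_torus_4_5]
    torus_incidence_chromatic_number_le[OF _ _ direction_coloring_torus_7_7]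
  by simp

end
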